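(* Let $N\ge2$ and consider the function $$D(p)=2\log N+\frac1N\sum_{k=1}^N(\log p_k)^2-\frac1{N^2}\Big(\sum_{k=1}^N\log p_k\Big)^2+\frac2N\sum_{k=1}^N\log p_k$$ on the open simplex $\{p=(p_1,\dots,p_N): p_k>0,\ \sum_k p_k=1\}$. If $p$ is a point of local extremum of $D$ on this set, then either $p=(1/N,\dots,1/N)$ or the coordinates of $p$ take exactly two distinct values.
   Context: For a probability vector $p$ with all $p_k>0$, $D(p)$ equals $\lim_{\alpha\to0+}\frac{\partial^2}{\partial\alpha^2}\mathcal H_\alpha(p)$, where $\mathcal H_\alpha(p)=\frac{1}{1-\alpha}\log\sum_{k=1}^N p_k^\alpha$ is the Rényi entropy; the paper denotes it $\mathcal H''_0(p)$. Logarithms are natural. *)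

theory Defs
  imports "HOL-Analysis.Analysis"
begin

definition open_simplex :: "(real ^ 'n) set" where
  "open_simplex = {p. (\<forall>k. p $ k > 0) \<and> (\<Sum>k\<in>UNIV. p $ k) = 1}"

definition Dfun :: "real ^ 'n \<Rightarrow> real" where
  "Dfun p = (let N = real CARD('n) in
     2 * ln N + (1 / N) * (\<Sum>k\<in>UNIV. (ln (p $ k))^2)
     - (1 / N^2) * (\<Sum>k\<in>UNIV. ln (p $ k))^2
     + (2 / N) * (\<Sum>k\<in>UNIV. ln (p $ k)))"

definition local_max_on :: "('a::metric_space \<Rightarrow> real) \<Rightarrow> 'a set \<Rightarrow> 'a \<Rightarrow> bool" where
  "local_max_on f S x \<longleftrightarrow> x \<in> S \<and> (\<exists>e>0. \<forall>y\<in>S. dist y x < e \<longrightarrow> f y \<le> f x)"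

definition local_min_on :: "('a::metric_space \<Rightarrow> real) \<Rightarrow> 'a set \<Rightarrow> 'a \<Rightarrow> bool" where
  "local_min_on f S x \<longleftrightarrow> x \<in> S \<and> (\<exists>e>0. \<forall>y\<in>S. dist y x < e \<longrightarrow> f x \<le> f y)"

end

theory Submission
  imports Defs
begin

text \<open>At an interior extremum the derivative of \<open>Dfun\<close> along every direction \<open>e\<^sub>i - e\<^sub>j\<close>
  tangent to the simplex vanishes. Computing the gradient, this says that
  \<open>(ln p\<^sub>k + c) / p\<^sub>k\<close> takes the same value for all \<open>k\<close>, with \<open>c = 1 - (\<Sum>\<^sub>k ln p\<^sub>k) / N\<close>.
  By Rolle's theorem, two distinct zeros of \<open>x \<mapsto> (ln x + c) / x - \<lambda>\<close> enclose a zero of its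
  derivative, i.e. the point \<open>exp (1 - c)\<close>; since that point is unique, the equation has at
  most two positive solutions, so the coordinates of \<open>p\<close> take at most two values.\<close>

lemma has_field_derivative_ln_plus_div:
  fixes c t :: real
  assumes "t > 0"
  shows "((\<lambda>x. (ln x + c) / x) has_field_derivative ((1 - ln t - c) / t\<^sup>2)) (at t)"
proof -
  have "((\<lambda>x. (ln x + c) / x) has_field_derivative ((1/t * t - (ln t + c) * 1) / (t*t))) (at t)"
    using assms by (auto intro!: derivative_eq_intros)
  then show ?thesis
    using assms by (simp add: power2_eq_square diff_diff_eq)
qed

lemma ln_plus_div_eq_imp_critical_between:
  fixes a b c :: real
  assumes "0 < a" "a < b" "(ln a + c) / a = (ln b + c) / b"
  shows "\<exists>z. a < z \<and> z < b \<and> ln z = 1 - c"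
proof -
  have "\<exists>z. a < z \<and> z < b \<and> (*) ((1 - ln z - c) / z\<^sup>2) = (\<lambda>v. 0)"
  proof (rule Rolle_deriv[where f = "\<lambda>x. (ln x + c) / x"])
    show "continuous_on {a..b} (\<lambda>x. (ln x + c) / x)"
      using assms by (intro continuous_intros) auto
    fix x assume "a < x" "x < b"
    then show "((\<lambda>x. (ln x + c) / x) has_derivative (*) ((1 - ln x - c) / x\<^sup>2)) (at x)"
      using has_field_derivative_ln_plus_div[of x c] assms
      unfolding has_field_derivative_def by simp
  qed (use assms in auto)
  then obtain z where "a < z" "z < b" and "(*) ((1 - ln z - c) / z\<^sup>2) = (\<lambda>v. 0)"
    by blast
  moreover from this have "(1 - ln z - c) / z\<^sup>2 = 0"
    by (metis mult.right_neutral)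
  ultimately show ?thesis
    using assms by auto
qed

lemma ln_plus_div_no_three_increasing_solutions:
  fixes x y z c :: real
  assumes "0 < x" "x < y" "y < z"
    and "(ln x + c) / x = (ln y + c) / y" "(ln y + c) / y = (ln z + c) / z"
  shows False
proof -
  obtain u where u: "x < u" "u < y" "ln u = 1 - c"
    using ln_plus_div_eq_imp_critical_between assms by blast
  obtain w where w: "y < w" "w < z" "ln w = 1 - c"
    using ln_plus_div_eq_imp_critical_between[of y z c] assms by auto
  have "u = w"
    using u w assms by (metis ln_inj_iff order.strict_trans)
  with u w show False
    by simp
qed

lemma ln_plus_div_at_most_two_solutions:
  fixes x y z c :: real
  assumes "0 < x" "0 < y" "0 < z"
    and "(ln x + c) / x = (ln y + c) / y" "(ln y + c) / y = (ln z + c) / z"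
  shows "x = y \<or> y = z \<or> x = z"
  using assms
    ln_plus_div_no_three_increasing_solutions[of x y z c]
    ln_plus_div_no_three_increasing_solutions[of x z y c]
    ln_plus_div_no_three_increasing_solutions[of y x z c]
    ln_plus_div_no_three_increasing_solutions[of y z x c]
    ln_plus_div_no_three_increasing_solutions[of z x y c]
    ln_plus_div_no_three_increasing_solutions[of z y x c]
  by (metis linorder_neqE_linordered_idom)

lemma local_extremum_on_line_deriv_eq_0:
  fixes f :: "'a::real_normed_vector \<Rightarrow> real"
  assumes ext: "local_max_on f S x \<or> local_min_on f S x"
    and deriv: "((\<lambda>t. f (x + t *\<^sub>R v)) has_real_derivative L) (at 0)"
    and "d > 0" and line: "\<And>t. \<bar>t\<bar> < d \<Longrightarrow> x + t *\<^sub>R v \<in> S"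
  shows "L = 0"
proof -
  obtain e where "e > 0" and e:
    "(\<forall>y\<in>S. dist y x < e \<longrightarrow> f y \<le> f x) \<or> (\<forall>y\<in>S. dist y x < e \<longrightarrow> f x \<le> f y)"
    using ext unfolding local_max_on_def local_min_on_def by blast
  define r where "r = min d (e / (norm v + 1))"
  have "norm v + 1 > 0"
    by (smt (verit) norm_ge_zero)
  then have "r > 0"
    using \<open>d > 0\<close> \<open>e > 0\<close> by (simp add: r_def)
  have near: "x + t *\<^sub>R v \<in> S \<and> dist (x + t *\<^sub>R v) x < e" if "\<bar>0 - t\<bar> < r" for t
  proof -
    have "\<bar>t\<bar> * norm v \<le> \<bar>t\<bar> * (norm v + 1)"
      by (simp add: mult_left_mono)
    also have "\<dots> < e"
      using that \<open>norm v + 1 > 0\<close> by (simp add: r_def less_divide_eq)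
    finally show ?thesis
      using that line by (simp add: r_def dist_norm)
  qed
  from e show ?thesis
  proof
    assume "\<forall>y\<in>S. dist y x < e \<longrightarrow> f y \<le> f x"
    then show "L = 0"
      using near by (intro DERIV_local_max[OF deriv \<open>r > 0\<close>]) auto
  next
    assume "\<forall>y\<in>S. dist y x < e \<longrightarrow> f x \<le> f y"
    then show "L = 0"
      using near by (intro DERIV_local_min[OF deriv \<open>r > 0\<close>]) auto
  qed
qed

lemma Dfun_line_has_derivative:
  fixes p v :: "real ^ 'n"
  assumes pos: "\<And>k. p $ k > 0"
  defines "N \<equiv> real CARD('n)" and "c \<equiv> 1 - (\<Sum>k\<in>UNIV. ln (p $ k)) / real CARD('n)"
  shows "((\<lambda>t. Dfun (p + t *\<^sub>R v)) has_real_derivative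
           (2 / N) * (\<Sum>k\<in>UNIV. v $ k * ((ln (p $ k) + c) / p $ k))) (at 0)"
proof -
  define S where "S = (\<Sum>k\<in>UNIV. ln (p $ k))"
  define A where "A = (\<Sum>k\<in>UNIV. ln (p $ k) * (v $ k / p $ k))"
  define B where "B = (\<Sum>k\<in>UNIV. v $ k / p $ k)"
  have "N > 0"
    by (simp add: N_def)
  have "((\<lambda>t. Dfun (p + t *\<^sub>R v)) has_real_derivative
          (1 / N) * (\<Sum>k\<in>UNIV. 2 * ln (p $ k) * (v $ k / p $ k))
          - (1 / N\<^sup>2) * (2 * S * B) + (2 / N) * B) (at 0)"
    unfolding Dfun_def Let_def N_def S_def B_def
    using pos by (auto intro!: derivative_eq_intros simp: field_simps power2_eq_square)
  moreover have "(\<Sum>k\<in>UNIV. v $ k * ((ln (p $ k) + c) / p $ k)) = A + (1 - S / N) * B"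
  proof -
    have "v $ k * ((ln (p $ k) + c) / p $ k) = ln (p $ k) * (v $ k / p $ k) + c * (v $ k / p $ k)"
      for k
      by (simp add: algebra_simps add_divide_distrib)
    moreover have "c = 1 - S / N"
      by (simp add: c_def S_def N_def)
    ultimately show ?thesis
      by (simp add: A_def B_def sum.distrib sum_distrib_left)
  qed
  moreover have "(\<Sum>k\<in>UNIV. 2 * ln (p $ k) * (v $ k / p $ k)) = 2 * A"
    by (simp add: A_def sum_distrib_left mult.assoc)
  moreover have "(1 / N) * (2 * A) - (1 / N\<^sup>2) * (2 * S * B) + (2 / N) * B
      = (2 / N) * (A + (1 - S / N) * B)"
    using \<open>N > 0\<close> by (simp add: field_simps power2_eq_square)
  ultimately show ?thesis
    by simp
qed

lemma sum_mult_axis_diff: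
  fixes f :: "'n::finite \<Rightarrow> real"
  assumes "i \<noteq> j"
  shows "(\<Sum>k\<in>UNIV. (axis i 1 - axis j 1 :: real ^ 'n) $ k * f k) = f i - f j"
proof -
  have "(\<Sum>k\<in>UNIV. (axis i 1 - axis j 1 :: real ^ 'n) $ k * f k)
      = (\<Sum>k\<in>UNIV. (if k = i then f k else 0) - (if k = j then f k else 0))"
    using assms by (intro sum.cong) (auto simp: axis_def)
  then show ?thesis
    by (simp add: sum_subtractf)
qed

lemma open_simplex_shift_mem:
  fixes p :: "real ^ 'n"
  assumes "p \<in> open_simplex" "i \<noteq> j" "\<bar>t\<bar> < p $ i" "\<bar>t\<bar> < p $ j"
  shows "p + t *\<^sub>R (axis i 1 - axis j 1) \<in> open_simplex"
proof -
  let ?q = "p + t *\<^sub>R (axis i 1 - axis j 1)"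
  have "?q $ k > 0" for k
    using assms by (auto simp: open_simplex_def axis_def)
  moreover have "(\<Sum>k\<in>UNIV. ?q $ k) = (\<Sum>k\<in>UNIV. p $ k) + t * (1 - 1)"
    using sum_mult_axis_diff[OF \<open>i \<noteq> j\<close>, of "\<lambda>_. 1"]
    by (simp add: sum.distrib sum_distrib_left[symmetric])
  ultimately show ?thesis
    using assms(1) by (simp add: open_simplex_def)
qed

lemma Dfun_extremum_imp_ln_plus_div_eq:
  fixes p :: "real ^ 'n"
  assumes ext: "local_max_on Dfun open_simplex p \<or> local_min_on Dfun open_simplex p"
  defines "c \<equiv> 1 - (\<Sum>k\<in>UNIV. ln (p $ k)) / real CARD('n)"
  shows "(ln (p $ i) + c) / p $ i = (ln (p $ j) + c) / p $ j"
proof (cases "i = j")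
  case False
  have "p \<in> open_simplex"
    using ext unfolding local_max_on_def local_min_on_def by blast
  then have pos: "\<And>k. p $ k > 0"
    by (simp add: open_simplex_def)
  have "((\<lambda>t. Dfun (p + t *\<^sub>R (axis i 1 - axis j 1))) has_real_derivative
          (2 / real CARD('n)) * ((ln (p $ i) + c) / p $ i - (ln (p $ j) + c) / p $ j)) (at 0)"
    using Dfun_line_has_derivative[OF pos, of "axis i 1 - axis j 1"]
      sum_mult_axis_diff[OF False, of "\<lambda>k. (ln (p $ k) + c) / p $ k"]
    by (simp add: c_def)
  then have "(2 / real CARD('n)) * ((ln (p $ i) + c) / p $ i - (ln (p $ j) + c) / p $ j) = 0"
    using ext pos False open_simplex_shift_mem[OF \<open>p \<in> open_simplex\<close> False]
    by (intro local_extremum_on_line_deriv_eq_0[where d = "min (p $ i) (p $ j)"]) auto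
  then show ?thesis
    by (simp only: mult_eq_0_iff) simp
qed simp

lemma open_simplex_const_eq_uniform:
  fixes p :: "real ^ 'n"
  assumes "p \<in> open_simplex" "\<And>k. p $ k = a"
  shows "p = (\<chi> k. 1 / real CARD('n))"
proof -
  have "real CARD('n) * a = 1"
    using assms by (simp add: open_simplex_def)
  then show ?thesis
    using assms(2) by (simp add: vec_eq_iff field_simps)
qed

theorem mainTheorem2:
  fixes p :: "real ^ 'n"
  assumes "CARD('n) \<ge> 2"
    and "local_max_on Dfun open_simplex p \<or> local_min_on Dfun open_simplex p"
  shows "p = (\<chi> k. 1 / real CARD('n)) \<or> card (range (\<lambda>k. p $ k)) = 2"
proof -
  have "p \<in> open_simplex"
    using assms(2) unfolding local_max_on_def local_min_on_def by blast
  then have pos: "\<And>k. p $ k > 0"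
    by (simp add: open_simplex_def)
  define a where "a = p $ undefined"
  show ?thesis
  proof (cases "\<forall>k. p $ k = a")
    case True
    then show ?thesis
      using open_simplex_const_eq_uniform[OF \<open>p \<in> open_simplex\<close>] by blast
  next
    case False
    then obtain j where j: "p $ j \<noteq> a"
      by blast
    have "p $ k \<in> {a, p $ j}" for k
      using ln_plus_div_at_most_two_solutions pos j
        Dfun_extremum_imp_ln_plus_div_eq[OF assms(2)]
      unfolding a_def by (metis insert_iff)
    then have "range (\<lambda>k. p $ k) = {a, p $ j}"
      by (auto simp: a_def)
    then show ?thesis
      using j by simp
  qed
qed

end
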